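(* Consider the one-stage ANC game described in the context, at a given initial pair $(x,s)$. Suppose that for every $x\in\mathbb{R}^n$, $a\in\mathcal{A}$ the functions $u\mapsto\Sigma(F(x,0),u,a)$ and $u\mapsto\Sigma(F(x,u),u,a)$ are continuous, coercive and convex on $\mathbb{R}^m$. Suppose further that there is a reserved action $a_\circ\in\mathcal{A}$, $a_\circ\ne1$, such that for any $j,k\in\mathcal{A}\setminus\{a_\circ\}$ with $j<k$ one has $h^{x,s}_j(u)>h^{x,s}_k(u)$ for all $u\in\mathring{U}(x)$. Suppose that there exists $u^*=u^*(x,s)\in\mathring{U}(x)$ such that (a) $h^{x,s}_1(u^* )=h^{x,s}_{a_\circ}(u^* )$; (b) for all $u\ne u^*$, $h^{x,s}_1(u)>h^{x,s}_1(u^* )$ or $h^{x,s}_{a_\circ}(u)>h^{x,s}_{a_\circ}(u^* )$; (c) $u^*$ is not a minimum of $h^{x,s}_1(\cdot)$ nor of $h^{x,s}_{a_\circ}(\cdot)$. Then the game admits a non-pure saddle point $(u^*,p^* )$ with $p^*$ supported on $\{1,a_\circ\}$.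
   Context: Setting (one-stage ANC game). Let $\mathcal{F}=\{1,\dots,|\mathcal{F}|\}$ be a finite set of regimes and $\mathcal{A}=\{1,\dots,N\}$ a finite set of jammer actions; for each $a$ let $P(a)$ be an $|\mathcal{F}|\times|\mathcal{F}|$ row-stochastic matrix; $q\in[0,1]^{|\mathcal{F}|}$. Let $F:\mathbb{R}^n\times\mathbb{R}^m\to\mathbb{R}^n$, $\sigma^0,\sigma^1,g^0$ real-valued on $\mathbb{R}^n\times\mathbb{R}^m$, $\mathbb{R}^n$, $\mathcal{A}\times\mathcal{F}$ respectively. For plant state $x$ and regime $s$, the controller chooses $u\in\mathbb{R}^m$, the jammer chooses $p\in\mathcal{S}_{N-1}$ (unit simplex in $\mathbb{R}^N$); $a\sim p$, $\mathrm{Pr}(s^+=i)=P_{si}(a)$, $\mathrm{Pr}(b=1\mid s^+)=q_{s^+}$, $x^+=F(x,bu)$; payoff $\Sigma(x^+,u,a)=\sigma^0(x,u)+\sigma^1(x^+)-g^0(a,s)$ with expectation $p'h^{x,s}(u)$, $h^{x,s}_i(u)=(P(i)q)_s\Sigma(F(x,u),u,i)+(1-(P(i)q)_s)\Sigma(F(x,0),u,i)$. $J_1=\inf_{u}\sup_pp'h^{x,s}(u)$, $J_2=\sup_p\inf_up'h^{x,s}(u)$. $U(x)\subset\mathbb{R}^m$ is a compact set containing the controller's optimal response and satisfying $J_1=\inf_{u\in U(x)}\sup_pp'h^{x,s}(u)=\sup_p\inf_{u\in U(x)}p'h^{x,s}(u)=J_2$ (such a set exists under the stated continuity/coercivity/convexity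 assumption); $\mathring{U}(x)$ is its interior. A saddle point is $(u^*,p^* )$ with $p'h^{x,s}(u^* )\le(p^* )'h^{x,s}(u^* )\le(p^* )'h^{x,s}(u)$ for all $u,p$; non-pure means $p^*$ has at least two positive components; supported on a set means zero outside it. Coercive: $h(u)\ge\eta(\|u\|)$ with $\eta(y)\to+\infty$. *)

theory Defs
  imports "HOL-Analysis.Analysis"
begin

text \<open>Regimes are {1..nF}, jammer actions are {1..N}.
  P a i j is the (i,j) entry of the row-stochastic matrix P(a).\<close>

definition simplexN :: "nat \<Rightarrow> (nat \<Rightarrow> real) set" where
  "simplexN N = {p. (\<forall>i. 0 \<le> p i) \<and> (\<forall>i. i \<notin> {1..N} \<longrightarrow> p i = 0)
                    \<and> (\<Sum>i\<in>{1..N}. p i) = 1}"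

definition row_stochastic :: "nat \<Rightarrow> (nat \<Rightarrow> nat \<Rightarrow> real) \<Rightarrow> bool" where
  "row_stochastic nF M \<longleftrightarrow> (\<forall>i\<in>{1..nF}. (\<forall>j\<in>{1..nF}. 0 \<le> M i j)
                              \<and> (\<Sum>j\<in>{1..nF}. M i j) = 1)"

definition Pq :: "nat \<Rightarrow> (nat \<Rightarrow> nat \<Rightarrow> nat \<Rightarrow> real) \<Rightarrow> (nat \<Rightarrow> real) \<Rightarrow> nat \<Rightarrow> nat \<Rightarrow> real" where
  "Pq nF P q a s = (\<Sum>j\<in>{1..nF}. P a s j * q j)"

definition Sig :: "('x \<Rightarrow> 'u \<Rightarrow> real) \<Rightarrow> ('x \<Rightarrow> real) \<Rightarrow> (nat \<Rightarrow> nat \<Rightarrow> real)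
     \<Rightarrow> 'x \<Rightarrow> nat \<Rightarrow> 'x \<Rightarrow> 'u \<Rightarrow> nat \<Rightarrow> real" where
  "Sig sigma0 sigma1 g0 x s xp u a = sigma0 x u + sigma1 xp - g0 a s"

definition hfun :: "nat \<Rightarrow> (nat \<Rightarrow> nat \<Rightarrow> nat \<Rightarrow> real) \<Rightarrow> (nat \<Rightarrow> real)
     \<Rightarrow> ('x \<Rightarrow> 'u::zero \<Rightarrow> 'x) \<Rightarrow> ('x \<Rightarrow> 'u \<Rightarrow> real) \<Rightarrow> ('x \<Rightarrow> real) \<Rightarrow> (nat \<Rightarrow> nat \<Rightarrow> real)
     \<Rightarrow> 'x \<Rightarrow> nat \<Rightarrow> nat \<Rightarrow> 'u \<Rightarrow> real" where
  "hfun nF P q F sigma0 sigma1 g0 x s i u =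
     Pq nF P q i s * Sig sigma0 sigma1 g0 x s (F x u) u i
     + (1 - Pq nF P q i s) * Sig sigma0 sigma1 g0 x s (F x 0) u i"

definition payoff :: "nat \<Rightarrow> (nat \<Rightarrow> 'u \<Rightarrow> real) \<Rightarrow> (nat \<Rightarrow> real) \<Rightarrow> 'u \<Rightarrow> real" where
  "payoff N h p u = (\<Sum>i\<in>{1..N}. p i * h i u)"

definition coercive :: "('u::real_normed_vector \<Rightarrow> real) \<Rightarrow> bool" where
  "coercive f \<longleftrightarrow> (\<exists>\<eta>::real \<Rightarrow> real. filterlim \<eta> at_top at_top \<and> (\<forall>u. \<eta> (norm u) \<le> f u))"

definition saddle_point :: "nat \<Rightarrow> (nat \<Rightarrow> 'u \<Rightarrow> real) \<Rightarrow> 'u \<Rightarrow> (nat \<Rightarrow> real) \<Rightarrow> bool" where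
  "saddle_point N h us ps \<longleftrightarrow> ps \<in> simplexN N \<and>
     (\<forall>p\<in>simplexN N. \<forall>u. payoff N h p us \<le> payoff N h ps us \<and> payoff N h ps us \<le> payoff N h ps u)"

definition non_pure :: "nat \<Rightarrow> (nat \<Rightarrow> real) \<Rightarrow> bool" where
  "non_pure N p \<longleftrightarrow> card {i\<in>{1..N}. 0 < p i} \<ge> 2"

definition supported_on :: "(nat \<Rightarrow> real) \<Rightarrow> nat set \<Rightarrow> bool" where
  "supported_on p S \<longleftrightarrow> (\<forall>i. i \<notin> S \<longrightarrow> p i = 0)"

end

theory Submission
  imports Defs
begin

text \<open>At a strict Pareto minimum of two convex functions which is a minimum of neither, some
  strictly positive weighting of the two functions is minimised there; choosing the jammer's mixed
  strategy with these weights on actions 1 and a0 makes the controller's best response us, and the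
  ordering of the remaining actions makes 1 and a0 the jammer's best responses to us.\<close>

definition strict_pareto_min :: "('a \<Rightarrow> real) \<Rightarrow> ('a \<Rightarrow> real) \<Rightarrow> 'a \<Rightarrow> bool" where
  "strict_pareto_min f g z \<longleftrightarrow> (\<forall>u. u \<noteq> z \<longrightarrow> f z < f u \<or> g z < g u)"

lemma strict_pareto_min_cross_ineq:
  fixes f g :: "'a::real_vector \<Rightarrow> real"
  assumes cf: "convex_on UNIV f" and cg: "convex_on UNIV g"
    and pm: "strict_pareto_min f g z"
    and fa: "f a < f z" and gb: "g b < g z"
  shows "(g b - g z) * (f a - f z) \<le> (g a - g z) * (f b - f z)"
proof (rule ccontr)
  assume neg: "\<not> ?thesis"
  define \<alpha> \<beta> \<gamma> \<delta> where "\<alpha> = f a - f z" "\<beta> = f b - f z" "\<gamma> = g a - g z" "\<delta> = g b - g z"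
  have "\<alpha> < 0" "\<delta> < 0" using fa gb by (simp_all add: \<alpha>_\<beta>_\<gamma>_\<delta>_def)
  moreover have "0 < \<beta>" using pm gb unfolding strict_pareto_min_def \<alpha>_\<beta>_\<gamma>_\<delta>_def by force
  ultimately have d: "0 < \<beta> - \<alpha>" by simp
  \<comment> \<open>the point of the segment from a to b on which the chord of f passes through f z\<close>
  define t where "t = - \<alpha> / (\<beta> - \<alpha>)"
  define w where "w = (1 - t) *\<^sub>R a + t *\<^sub>R b"
  have t01: "0 \<le> t" "t \<le> 1" using \<open>\<alpha> < 0\<close> \<open>0 < \<beta>\<close> d by (simp_all add: t_def field_simps)
  have "f w \<le> (1 - t) * f a + t * f b" using convex_onD[OF cf t01] by (simp add: w_def)
  also have "\<dots> = f z + ((1 - t) * \<alpha> + t * \<beta>)" by (simp add: \<alpha>_\<beta>_\<gamma>_\<delta>_def algebra_simps)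
  also have "(1 - t) * \<alpha> + t * \<beta> = 0" using d by (simp add: t_def field_simps)
  finally have fw: "f w \<le> f z" by simp
  have "(1 - t) * \<gamma> + t * \<delta> = (\<beta> * \<gamma> - \<alpha> * \<delta>) / (\<beta> - \<alpha>)"
    using d by (simp add: t_def divide_simps)
  also have "\<dots> < 0" using neg d by (simp add: \<alpha>_\<beta>_\<gamma>_\<delta>_def divide_neg_pos algebra_simps)
  finally have g_drop: "(1 - t) * \<gamma> + t * \<delta> < 0" .
  have "g w \<le> (1 - t) * g a + t * g b" using convex_onD[OF cg t01] by (simp add: w_def)
  also have "\<dots> = g z + ((1 - t) * \<gamma> + t * \<delta>)" by (simp add: \<alpha>_\<beta>_\<gamma>_\<delta>_def algebra_simps)
  finally have "g w < g z" using g_drop by linarith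
  with fw pm show False unfolding strict_pareto_min_def by force
qed

lemma strict_pareto_min_scalarization:
  fixes f g :: "'a::real_vector \<Rightarrow> real"
  assumes cf: "convex_on UNIV f" and cg: "convex_on UNIV g"
    and eq: "f z = g z" and pm: "strict_pareto_min f g z"
    and f_not_min: "\<not> (\<forall>u. f z \<le> f u)" and g_not_min: "\<not> (\<forall>u. g z \<le> g u)"
  shows "\<exists>l. 0 < l \<and> l < 1 \<and> (\<forall>u. f z \<le> l * f u + (1 - l) * g u)"
proof -
  \<comment> \<open>points decreasing g force a lower bound on the weight l, points decreasing f an upper one\<close>
  define lo where "lo b = (g z - g b) / ((f b - f z) - (g b - g z))" for b
  define up where "up a = (g a - g z) / ((g a - g z) - (f a - f z))" for a
  have f_up: "f z < f u" if "g u < g z" for u using pm that unfolding strict_pareto_min_def by force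
  have g_up: "g z < g u" if "f u < f z" for u using pm that unfolding strict_pareto_min_def by force
  have lo_le_up: "lo b \<le> up a" if "g b < g z" "f a < f z" for a b
    using strict_pareto_min_cross_ineq[OF cf cg pm that(2,1)] that f_up[OF that(1)] g_up[OF that(2)]
    unfolding lo_def up_def by (simp add: divide_simps) (simp add: algebra_simps)
  obtain a where a: "f a < f z" using f_not_min by (meson not_le)
  obtain b where b: "g b < g z" using g_not_min by (meson not_le)
  define l where "l = (SUP b\<in>{b. g b < g z}. lo b)"
  have bdd: "bdd_above (lo ` {b. g b < g z})" using lo_le_up a by (intro bdd_aboveI2) blast
  have lo_le_l: "lo b \<le> l" if "g b < g z" for b
    unfolding l_def using bdd that by (intro cSUP_upper) auto
  have l_le_up: "l \<le> up a" if "f a < f z" for a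
    unfolding l_def using b lo_le_up that by (intro cSUP_least) auto
  have "0 < lo b" using b f_up[OF b] by (simp add: lo_def)
  with lo_le_l[OF b] have l0: "0 < l" by linarith
  have "up a < 1" using a g_up[OF a] by (simp add: up_def)
  with l_le_up[OF a] have l1: "l < 1" by linarith
  have "f z \<le> l * f u + (1 - l) * g u" for u
  proof -
    consider "f u < f z" | "g u < g z" | "f z \<le> f u" "g z \<le> g u" by linarith
    then show ?thesis
    proof cases
      case 1
      then have "l * ((g u - g z) - (f u - f z)) \<le> g u - g z"
        using l_le_up[OF 1] g_up[OF 1] by (simp add: up_def field_simps)
      then show ?thesis using eq by (simp add: algebra_simps)
    next
      case 2
      then have "g z - g u \<le> l * ((f u - f z) - (g u - g z))"
        using lo_le_l[OF 2] f_up[OF 2] by (simp add: lo_def field_simps)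
      then show ?thesis using eq by (simp add: algebra_simps)
    next
      case 3
      then have "l * f z + (1 - l) * g z \<le> l * f u + (1 - l) * g u"
        using l0 l1 by (intro add_mono mult_left_mono) auto
      then show ?thesis using eq by (simp add: algebra_simps)
    qed
  qed
  with l0 l1 show ?thesis by blast
qed

lemma Pq_between_0_1:
  assumes "row_stochastic nF (P a)" and "\<forall>i\<in>{1..nF}. 0 \<le> q i \<and> q i \<le> 1" and "s \<in> {1..nF}"
  shows "0 \<le> Pq nF P q a s \<and> Pq nF P q a s \<le> 1"
proof -
  have nn: "\<forall>j\<in>{1..nF}. 0 \<le> P a s j" and sum1: "(\<Sum>j\<in>{1..nF}. P a s j) = 1"
    using assms(1,3) unfolding row_stochastic_def by auto
  have "0 \<le> Pq nF P q a s" unfolding Pq_def using nn assms(2) by (intro sum_nonneg) auto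
  moreover have "Pq nF P q a s \<le> (\<Sum>j\<in>{1..nF}. P a s j)" unfolding Pq_def
    using nn assms(2) by (intro sum_mono) (simp add: mult_left_le)
  ultimately show ?thesis using sum1 by simp
qed

lemma convex_on_hfun:
  fixes F :: "'x \<Rightarrow> 'u::real_vector \<Rightarrow> 'x"
  assumes "0 \<le> Pq nF P q a s" "Pq nF P q a s \<le> 1"
    and "convex_on UNIV (\<lambda>u. Sig sigma0 sigma1 g0 x s (F x u) u a)"
    and "convex_on UNIV (\<lambda>u. Sig sigma0 sigma1 g0 x s (F x 0) u a)"
  shows "convex_on UNIV (hfun nF P q F sigma0 sigma1 g0 x s a)"
  unfolding hfun_def using assms by (intro convex_on_add convex_on_cmul) auto

definition two_point_strategy :: "nat \<Rightarrow> nat \<Rightarrow> real \<Rightarrow> nat \<Rightarrow> real" where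
  "two_point_strategy i j l k = (if k = i then l else if k = j then 1 - l else 0)"

lemma payoff_two_point_strategy:
  assumes "i \<in> {1..N}" "j \<in> {1..N}" "i \<noteq> j"
  shows "payoff N h (two_point_strategy i j l) u = l * h i u + (1 - l) * h j u"
proof -
  let ?p = "two_point_strategy i j l"
  have "payoff N h ?p u = ?p i * h i u + (\<Sum>k\<in>{1..N} - {i}. ?p k * h k u)"
    unfolding payoff_def using assms by (intro sum.remove) auto
  also have "(\<Sum>k\<in>{1..N} - {i}. ?p k * h k u)
      = ?p j * h j u + (\<Sum>k\<in>{1..N} - {i} - {j}. ?p k * h k u)"
    using assms by (intro sum.remove) auto
  also have "(\<Sum>k\<in>{1..N} - {i} - {j}. ?p k * h k u) = 0"
    by (intro sum.neutral) (auto simp: two_point_strategy_def)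
  also have "?p i * h i u + (?p j * h j u + 0) = l * h i u + (1 - l) * h j u"
    using assms(3) by (simp add: two_point_strategy_def)
  finally show ?thesis .
qed

lemma two_point_strategy_in_simplexN:
  assumes "i \<in> {1..N}" "j \<in> {1..N}" "i \<noteq> j" "0 \<le> l" "l \<le> 1"
  shows "two_point_strategy i j l \<in> simplexN N"
proof -
  have "(\<Sum>k\<in>{1..N}. two_point_strategy i j l k) = 1"
    using payoff_two_point_strategy[OF assms(1-3), of "\<lambda>_ _. 1"] by (simp add: payoff_def)
  then show ?thesis unfolding simplexN_def using assms by (auto simp: two_point_strategy_def)
qed

lemma non_pure_two_point_strategy:
  assumes "i \<in> {1..N}" "j \<in> {1..N}" "i \<noteq> j" "0 < l" "l < 1"
  shows "non_pure N (two_point_strategy i j l)"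
proof -
  have "{k\<in>{1..N}. 0 < two_point_strategy i j l k} = {i, j}"
    using assms by (auto simp: two_point_strategy_def)
  then show ?thesis unfolding non_pure_def using assms(3) by simp
qed

lemma supported_on_two_point_strategy: "supported_on (two_point_strategy i j l) {i, j}"
  unfolding supported_on_def two_point_strategy_def by auto

lemma saddle_point_two_point_strategy:
  assumes "i \<in> {1..N}" "j \<in> {1..N}" "i \<noteq> j" "0 \<le> l" "l \<le> 1"
    and eq: "h i z = h j z"
    and best_actions: "\<forall>k\<in>{1..N}. h k z \<le> h i z"
    and min_z: "\<forall>u. h i z \<le> l * h i u + (1 - l) * h j u"
  shows "saddle_point N h z (two_point_strategy i j l)"
  unfolding saddle_point_def
proof (intro conjI ballI allI two_point_strategy_in_simplexN assms(1-5))
  note pay = payoff_two_point_strategy[OF assms(1-3)]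
  fix p u assume p: "p \<in> simplexN N"
  have "payoff N h p z \<le> (\<Sum>k\<in>{1..N}. p k * h i z)"
    unfolding payoff_def using p best_actions
    by (intro sum_mono mult_left_mono) (auto simp: simplexN_def)
  also have "\<dots> = h i z" using p by (simp add: simplexN_def sum_distrib_right[symmetric])
  also have "\<dots> = payoff N h (two_point_strategy i j l) z" using eq by (simp add: pay algebra_simps)
  finally show "payoff N h p z \<le> payoff N h (two_point_strategy i j l) z" .
  show "payoff N h (two_point_strategy i j l) z \<le> payoff N h (two_point_strategy i j l) u"
    using min_z eq by (simp add: pay algebra_simps)
qed

theorem corollary1:
  fixes nF N :: nat
    and P :: "nat \<Rightarrow> nat \<Rightarrow> nat \<Rightarrow> real"
    and q :: "nat \<Rightarrow> real"
    and F :: "real^'n \<Rightarrow> real^'m \<Rightarrow> real^'n"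
    and sigma0 :: "real^'n \<Rightarrow> real^'m \<Rightarrow> real"
    and sigma1 :: "real^'n \<Rightarrow> real"
    and g0 :: "nat \<Rightarrow> nat \<Rightarrow> real"
    and U :: "real^'n \<Rightarrow> (real^'m) set"
    and x :: "real^'n" and s :: nat and a0 :: nat and us :: "real^'m"
  defines "h \<equiv> hfun nF P q F sigma0 sigma1 g0 x s"
  assumes stoch: "\<forall>a\<in>{1..N}. row_stochastic nF (P a)"
    and q01: "\<forall>i\<in>{1..nF}. 0 \<le> q i \<and> q i \<le> 1"
    and s_in: "s \<in> {1..nF}"
    and reg: "\<forall>y::real^'n. \<forall>a\<in>{1..N}.
        continuous_on UNIV (\<lambda>u. Sig sigma0 sigma1 g0 y s (F y 0) u a) \<and>
        coercive (\<lambda>u. Sig sigma0 sigma1 g0 y s (F y 0) u a) \<and>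
        convex_on UNIV (\<lambda>u. Sig sigma0 sigma1 g0 y s (F y 0) u a) \<and>
        continuous_on UNIV (\<lambda>u. Sig sigma0 sigma1 g0 y s (F y u) u a) \<and>
        coercive (\<lambda>u. Sig sigma0 sigma1 g0 y s (F y u) u a) \<and>
        convex_on UNIV (\<lambda>u. Sig sigma0 sigma1 g0 y s (F y u) u a)"
    and U_compact: "compact (U x)"
    and U_opt: "\<forall>u. (SUP p\<in>simplexN N. payoff N h p u) = (INF v. SUP p\<in>simplexN N. payoff N h p v)
                   \<longrightarrow> u \<in> U x"
    and U_J1: "(INF u. SUP p\<in>simplexN N. payoff N h p u) = (INF u\<in>U x. SUP p\<in>simplexN N. payoff N h p u)"
    and U_minimax: "(INF u\<in>U x. SUP p\<in>simplexN N. payoff N h p u) = (SUP p\<in>simplexN N. INF u\<in>U x. payoff N h p u)"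
    and U_J2: "(SUP p\<in>simplexN N. INF u\<in>U x. payoff N h p u) = (SUP p\<in>simplexN N. INF u. payoff N h p u)"
    and a0_in: "a0 \<in> {1..N}" and a0_ne: "a0 \<noteq> 1"
    and order: "\<forall>j\<in>{1..N} - {a0}. \<forall>k\<in>{1..N} - {a0}. j < k \<longrightarrow>
                  (\<forall>u\<in>interior (U x). h j u > h k u)"
    and us_in: "us \<in> interior (U x)"
    and cond_a: "h 1 us = h a0 us"
    and cond_b: "\<forall>u. u \<noteq> us \<longrightarrow> h 1 u > h 1 us \<or> h a0 u > h a0 us"
    and cond_c: "\<not> (\<forall>u. h 1 us \<le> h 1 u) \<and> \<not> (\<forall>u. h a0 us \<le> h a0 u)"
  shows "\<exists>ps. saddle_point N h us ps \<and> non_pure N ps \<and> supported_on ps {1, a0}"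
proof -
  have one_in: "1 \<in> {1..N}" using a0_in by auto
  have convex_h: "convex_on UNIV (h a)" if "a \<in> {1..N}" for a
    unfolding h_def using that reg Pq_between_0_1[OF _ q01 s_in] stoch
    by (intro convex_on_hfun) auto
  obtain l where l: "0 < l" "l < 1" "\<forall>u. h 1 us \<le> l * h 1 u + (1 - l) * h a0 u"
    using strict_pareto_min_scalarization[OF convex_h[OF one_in] convex_h[OF a0_in] cond_a]
      cond_b cond_c unfolding strict_pareto_min_def by blast
  have best_actions: "\<forall>k\<in>{1..N}. h k us \<le> h 1 us"
  proof
    fix k assume k: "k \<in> {1..N}"
    show "h k us \<le> h 1 us"
    proof (cases "k = 1 \<or> k = a0")
      case False
      with k a0_ne one_in have "1 \<in> {1..N} - {a0}" "k \<in> {1..N} - {a0}" "1 < k" by auto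
      with order us_in show ?thesis by fastforce
    qed (use cond_a in auto)
  qed
  show ?thesis
    using saddle_point_two_point_strategy[OF one_in a0_in a0_ne[symmetric] _ _ cond_a best_actions l(3)]
      non_pure_two_point_strategy[OF one_in a0_in a0_ne[symmetric] l(1,2)]
      supported_on_two_point_strategy l by auto
qed

end
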